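(* Let $D$ be a Dyck shape of length $2n$ and $1\leq i\leq n+1$. Then there is a unique way to add to $D$ a ribbon (i.e., a unique Dyck shape $E$ of length $2n+2$ with $D\subset E$ and $E/D$ a ribbon) such that the number of South-West–to–North-East diagonals met by the ribbon $E/D$ is $i$.
   Context: The staircase partition of size $n$ is $\delta_n=(n,n-1,\dots,1)$. A Dyck shape of length $2n$ is a skew shape $\delta_n/\lambda$ where $\lambda$ is a Young diagram with $\lambda\subset\delta_{n-1}$. It is drawn in "Japanese notation": the French-convention Young diagram rotated by 135 degrees clockwise, so that the upper border of a Dyck shape of length $2n$ traces a Dyck path of length $2n$ (steps $\nearrow=(1,1)$, $\searrow=(1,-1)$ from $(0,0)$ to $(2n,0)$ staying at nonnegative height), and the cells are unit squares standing on a corner. In this picture the cells lie along two families of diagonals: the South-East to North-West diagonals (whose cell counts are the parts of $\lambda$'s complement structure) and the South-West to North-East diagonals. A skew shape is a ribbon if it is connected and contains no $2\times 2$ square. For Dyck shapes $D$, $E$ of lengths $2n$ and $2n+2$, arranged so that their leftmost cells coincide, one writes $D\sqsubset E$ ("$E$ is obtained from $D$ by addition of a ribbon") if $D\subset E$ and $E/D$ is a ribbon. Equivalently, in terms of words over $\{\nearrow,\searrow\}$, $D\sqsubset E$ iff $E$ is obtained from $D\searrow\searrow$ by changing one $\searrow$ (any except the last one) into $\nearrow$, giving $n+1$ possibilities. *)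

theory Defs
  imports Main
begin

text \<open>Cells of Young diagrams in French convention are pairs (a,b) of naturals:
  a = row index (from the bottom), b = column index (from the left), both starting at 0.\<close>

definition staircase :: "nat \<Rightarrow> (nat \<times> nat) set" where
  "staircase n = {(a, b). a + b < n}"

definition young_diagram :: "(nat \<times> nat) set \<Rightarrow> bool" where
  "young_diagram lam \<longleftrightarrow> finite lam \<and>
     (\<forall>a b a' b'. (a, b) \<in> lam \<longrightarrow> a' \<le> a \<longrightarrow> b' \<le> b \<longrightarrow> (a', b') \<in> lam)"

text \<open>Japanese-notation coordinates for a cell of delta_n: a cell is recorded as (i,j)
  where i is the index (from the left) of its South-West to North-East diagonal and j the
  index (from the left) of its South-East to North-West diagonal. The leftmost cell of
  any Dyck shape is (0,0), so shapes of different lengths are arranged with coinciding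
  leftmost cells.\<close>

definition japanese :: "nat \<Rightarrow> nat \<times> nat \<Rightarrow> nat \<times> nat" where
  "japanese n = (\<lambda>(a, b). (a, n - 1 - b))"

definition dyck_shape :: "nat \<Rightarrow> (nat \<times> nat) set \<Rightarrow> bool" where
  "dyck_shape n D \<longleftrightarrow>
     (\<exists>lam. young_diagram lam \<and> lam \<subseteq> staircase (n - 1) \<and>
            D = japanese n ` (staircase n - lam))"

definition adjacent_cells :: "nat \<times> nat \<Rightarrow> nat \<times> nat \<Rightarrow> bool" where
  "adjacent_cells c d \<longleftrightarrow>
     (fst c = fst d \<and> (snd c = Suc (snd d) \<or> snd d = Suc (snd c))) \<or>
     (snd c = snd d \<and> (fst c = Suc (fst d) \<or> fst d = Suc (fst c)))"

definition connected_cells :: "(nat \<times> nat) set \<Rightarrow> bool" where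
  "connected_cells S \<longleftrightarrow> S \<noteq> {} \<and>
     (\<forall>x\<in>S. \<forall>y\<in>S. (\<lambda>u v. u \<in> S \<and> v \<in> S \<and> adjacent_cells u v)\<^sup>*\<^sup>* x y)"

definition ribbon :: "(nat \<times> nat) set \<Rightarrow> bool" where
  "ribbon S \<longleftrightarrow> connected_cells S \<and>
     \<not> (\<exists>i j. {(i, j), (Suc i, j), (i, Suc j), (Suc i, Suc j)} \<subseteq> S)"

definition sw_ne_diagonals :: "(nat \<times> nat) set \<Rightarrow> nat set" where
  "sw_ne_diagonals S = fst ` S"

end

theory Submission
  imports Defs
begin

text \<open>A Dyck shape of length \<open>2n\<close> is encoded by its profile \<open>t\<close>: the cells on the
  South-West to North-East diagonal \<open>a\<close> are the \<open>(a, j)\<close> with \<open>a \<le> j < t a\<close>, where \<open>t\<close> is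
  monotone, \<open>a < t a\<close> below \<open>n\<close> and \<open>t a = n\<close> from \<open>n\<close> on. Let \<open>k\<close> be the first diagonal
  met by a ribbon added to the shape. Connectivity forces the ribbon to meet all diagonals
  \<open>k, \<dots>, n\<close> and, on consecutive diagonals \<open>a, a + 1\<close>, to share a SE-NW diagonal, so the
  new profile is at least \<open>t (a + 1) + 1\<close> at \<open>a\<close>; the absence of \<open>2 \<times> 2\<close> squares forbids
  more. Hence the new profile is \<open>t\<close> below \<open>k\<close> and \<open>t (a + 1) + 1\<close> from \<open>k\<close> on, and the
  ribbon meets exactly \<open>n + 1 - k\<close> diagonals, so \<open>i = n + 1 - k\<close> determines it.\<close>

definition dyck_profile :: "nat \<Rightarrow> (nat \<Rightarrow> nat) \<Rightarrow> bool" where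
  "dyck_profile n t \<longleftrightarrow> mono t \<and> (\<forall>a<n. a < t a) \<and> (\<forall>a\<ge>n. t a = n)"

definition profile_cells :: "(nat \<Rightarrow> nat) \<Rightarrow> (nat \<times> nat) set" where
  "profile_cells t = {(a, j). a \<le> j \<and> j < t a}"

context
  fixes n :: nat and t :: "nat \<Rightarrow> nat"
  assumes profile: "dyck_profile n t"
begin

lemma dyck_profile_mono: "a \<le> b \<Longrightarrow> t a \<le> t b"
  using profile unfolding dyck_profile_def mono_def by blast

lemma dyck_profile_less: "a < n \<Longrightarrow> a < t a"
  using profile unfolding dyck_profile_def by blast

lemma dyck_profile_eq: "n \<le> a \<Longrightarrow> t a = n"
  using profile unfolding dyck_profile_def by blast

lemma dyck_profile_le: "t a \<le> n"
  using dyck_profile_mono[of a "a + n"] dyck_profile_eq[of "a + n"] by simp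

lemma dyck_profile_ge: "a \<le> n \<Longrightarrow> a \<le> t a"
  using dyck_profile_less[of a] dyck_profile_eq[of a] by (cases "a < n") auto

end

subsection \<open>Dyck shapes are the cell sets of profiles\<close>

lemma young_diagram_row_lengths:
  assumes "young_diagram lam" and "lam \<subseteq> staircase m"
  obtains l where "antimono l" and "\<And>a b. (a, b) \<in> lam \<longleftrightarrow> b < l a"
    and "\<And>a. 0 < l a \<Longrightarrow> a + l a \<le> m"
proof
  have down: "\<And>a b a' b'. (a, b) \<in> lam \<Longrightarrow> a' \<le> a \<Longrightarrow> b' \<le> b \<Longrightarrow> (a', b') \<in> lam"
    using assms(1) unfolding young_diagram_def by blast
  have inside: "\<And>a b. (a, b) \<in> lam \<Longrightarrow> a + b < m"
    using assms(2) unfolding staircase_def by blast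
  define l where "l a = (LEAST b. (a, b) \<notin> lam)" for a
  have not_in: "(a, l a) \<notin> lam" for a
    unfolding l_def by (rule LeastI[of _ m]) (use inside in fastforce)
  show row: "(a, b) \<in> lam \<longleftrightarrow> b < l a" for a b
  proof
    assume "(a, b) \<in> lam"
    then show "b < l a" using down[of a b a "l a"] not_in[of a] by (cases "l a \<le> b") auto
  qed (unfold l_def, use not_less_Least in blast)
  show "antimono l"
  proof (rule antimonoI, rule ccontr)
    fix a a' :: nat assume "a \<le> a'" "\<not> l a' \<le> l a"
    then have "(a, l a) \<in> lam" using row down by (meson not_le)
    then show False using not_in by blast
  qed
  show "a + l a \<le> m" if "0 < l a" for a
    using inside[of a "l a - 1"] row[of a "l a - 1"] that by simp
qed

lemma dyck_shape_imp_profile: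
  assumes "dyck_shape n D"
  obtains t where "dyck_profile n t" and "D = profile_cells t"
proof -
  obtain lam where young: "young_diagram lam" and lam: "lam \<subseteq> staircase (n - 1)"
    and D: "D = japanese n ` (staircase n - lam)"
    using assms unfolding dyck_shape_def by blast
  obtain l where anti: "antimono l" and row: "\<And>a b. (a, b) \<in> lam \<longleftrightarrow> b < l a"
    and short: "\<And>a. 0 < l a \<Longrightarrow> a + l a \<le> n - 1"
    using young_diagram_row_lengths[OF young lam] by blast
  have bound: "l a = 0 \<or> a + l a < n" for a
    using short[of a] by (cases "l a = 0") auto
  have profile: "dyck_profile n (\<lambda>a. n - l a)"
    unfolding dyck_profile_def
  proof (intro conjI allI impI)
    show "mono (\<lambda>a. n - l a)"
      using anti by (auto simp: mono_def antimono_def intro: diff_le_mono2)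
  next
    fix a assume "a < n"
    then show "a < n - l a" using bound[of a] by auto
  next
    fix a assume "n \<le> a"
    then show "n - l a = n" using bound[of a] by auto
  qed
  have "D = profile_cells (\<lambda>a. n - l a)"
  proof
    show "D \<subseteq> profile_cells (\<lambda>a. n - l a)"
      unfolding D japanese_def staircase_def profile_cells_def by (auto simp: row)
    show "profile_cells (\<lambda>a. n - l a) \<subseteq> D"
    proof
      fix x assume "x \<in> profile_cells (\<lambda>a. n - l a)"
      then obtain a j where x: "x = (a, j)" "a \<le> j" "j < n - l a"
        unfolding profile_cells_def by blast
      then have "(a, n - 1 - j) \<in> staircase n - lam" "x = japanese n (a, n - 1 - j)"
        unfolding staircase_def japanese_def by (auto simp: row)
      then show "x \<in> D" unfolding D by blast
    qed
  qed
  with profile show thesis by (rule that)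
qed

lemma dyck_shape_profile_cells:
  assumes "dyck_profile n t"
  shows "dyck_shape n (profile_cells t)"
proof -
  note profile = dyck_profile_mono[OF assms] dyck_profile_less[OF assms]
    dyck_profile_eq[OF assms] dyck_profile_le[OF assms]
  define lam where "lam = {(a, b). b < n - t a}"
  have row: "a < n" if "(a, b) \<in> lam" for a b
    using that profile(3)[of a] unfolding lam_def by (cases "n \<le> a") auto
  have young: "young_diagram lam"
    unfolding young_diagram_def
  proof (intro conjI allI impI)
    show "finite lam"
      by (rule finite_subset[of _ "{..<n} \<times> {..<n}"]) (use row in \<open>auto simp: lam_def\<close>)
  next
    fix a b a' b' assume "(a, b) \<in> lam" "a' \<le> a" "b' \<le> b"
    then show "(a', b') \<in> lam" using profile(1)[of a' a] unfolding lam_def by auto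
  qed
  have small: "lam \<subseteq> staircase (n - 1)"
    using row profile(2) unfolding lam_def staircase_def by fastforce
  have "profile_cells t = japanese n ` (staircase n - lam)"
  proof (rule set_eqI)
    fix x :: "nat \<times> nat"
    obtain a j where x: "x = (a, j)" by fastforce
    show "x \<in> profile_cells t \<longleftrightarrow> x \<in> japanese n ` (staircase n - lam)"
    proof
      assume "x \<in> profile_cells t"
      then have "a \<le> j" "j < t a" unfolding x profile_cells_def by auto
      moreover have "t a \<le> n" by (rule profile(4))
      ultimately have "(a, n - 1 - j) \<in> staircase n - lam" and "x = japanese n (a, n - 1 - j)"
        unfolding staircase_def lam_def x japanese_def by auto
      then show "x \<in> japanese n ` (staircase n - lam)" by blast
    qed (auto simp: x profile_cells_def japanese_def staircase_def lam_def)
  qed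
  then show ?thesis unfolding dyck_shape_def using young small by blast
qed

abbreviation cell_step :: "(nat \<times> nat) set \<Rightarrow> nat \<times> nat \<Rightarrow> nat \<times> nat \<Rightarrow> bool" where
  "cell_step S u v \<equiv> u \<in> S \<and> v \<in> S \<and> adjacent_cells u v"

lemma symp_cell_step: "symp (cell_step S)"
  by (rule sympI) (auto simp: adjacent_cells_def)

lemma cell_path_along_diagonal:
  assumes "j0 \<le> j1" and "\<And>j. j0 \<le> j \<Longrightarrow> j \<le> j1 \<Longrightarrow> (a, j) \<in> S"
  shows "(cell_step S)\<^sup>*\<^sup>* (a, j0) (a, j1)"
  using assms
proof (induction j1 rule: dec_induct)
  case (step m)
  then have "cell_step S (a, m) (a, Suc m)" by (simp add: adjacent_cells_def)
  moreover have "(cell_step S)\<^sup>*\<^sup>* (a, j0) (a, m)" using step by simp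
  ultimately show ?case by (rule rtranclp.rtrancl_into_rtrancl[rotated])
qed simp

lemma connected_cellsI:
  assumes "x0 \<in> S" and "\<And>x. x \<in> S \<Longrightarrow> (cell_step S)\<^sup>*\<^sup>* x x0"
  shows "connected_cells S"
  unfolding connected_cells_def
proof (intro conjI ballI)
  fix x y assume "x \<in> S" "y \<in> S"
  have "(cell_step S)\<^sup>*\<^sup>* x0 y"
    using sympD[OF symp_rtranclp[OF symp_cell_step] assms(2)[OF \<open>y \<in> S\<close>]] .
  then show "(cell_step S)\<^sup>*\<^sup>* x y"
    using assms(2)[OF \<open>x \<in> S\<close>] by (rule rtranclp_trans[rotated])
qed (use assms(1) in blast)

lemma connected_cells_crossing:
  assumes "connected_cells S" and "x \<in> S" "y \<in> S" and "fst x \<le> a" "a < fst y"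
  obtains j where "(a, j) \<in> S" and "(Suc a, j) \<in> S"
proof (rule ccontr)
  assume no_crossing: "\<not> thesis"
  note crossing = that
  have "fst z \<le> a" if "(cell_step S)\<^sup>*\<^sup>* x z" for z
    using that
  proof (induction rule: rtranclp_induct)
    case (step y z)
    then have "y \<in> S" "z \<in> S" "adjacent_cells y z" by auto
    show "fst z \<le> a"
    proof (rule ccontr)
      assume "\<not> fst z \<le> a"
      with step.IH \<open>adjacent_cells y z\<close> have "y = (a, snd y)" "z = (Suc a, snd y)"
        unfolding adjacent_cells_def by (auto simp: prod_eq_iff)
      then show False using no_crossing crossing \<open>y \<in> S\<close> \<open>z \<in> S\<close> by metis
    qed
  qed (use assms(4) in simp)
  moreover have "(cell_step S)\<^sup>*\<^sup>* x y"
    using assms(1-3) unfolding connected_cells_def by blast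
  ultimately show False using assms(5) by fastforce
qed

subsection \<open>Adding a ribbon starting at a given diagonal\<close>

definition add_ribbon :: "(nat \<Rightarrow> nat) \<Rightarrow> nat \<Rightarrow> nat \<Rightarrow> nat" where
  "add_ribbon t k a = (if a < k then t a else Suc (t (Suc a)))"

definition ribbon_band :: "(nat \<Rightarrow> nat) \<Rightarrow> nat \<Rightarrow> nat \<Rightarrow> (nat \<times> nat) set" where
  "ribbon_band t k n = {(a, j). k \<le> a \<and> a \<le> n \<and> t a \<le> j \<and> j \<le> t (Suc a)}"

context
  fixes n :: nat and t :: "nat \<Rightarrow> nat"
  assumes profile: "dyck_profile n t"
begin

lemma dyck_profile_add_ribbon:
  assumes "k \<le> n"
  shows "dyck_profile (n + 1) (add_ribbon t k)"
  unfolding dyck_profile_def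
proof (intro conjI allI impI)
  note t = dyck_profile_mono[OF profile] dyck_profile_less[OF profile] dyck_profile_eq[OF profile]
  show "mono (add_ribbon t k)"
  proof (rule monoI)
    fix a b :: nat assume "a \<le> b"
    then show "add_ribbon t k a \<le> add_ribbon t k b"
      using t(1)[of a b] t(1)[of a "Suc b"] t(1)[of "Suc a" "Suc b"]
      unfolding add_ribbon_def by auto
  qed
  show "a < add_ribbon t k a" if "a < n + 1" for a
    using that t(2)[of a] t(1)[of a "Suc a"] t(3)[of "Suc a"] assms
    unfolding add_ribbon_def by (cases "a < n") auto
  show "add_ribbon t k a = n + 1" if "n + 1 \<le> a" for a
    using that t(3)[of "Suc a"] assms unfolding add_ribbon_def by auto
qed

lemma profile_cells_subset_add_ribbon: "profile_cells t \<subseteq> profile_cells (add_ribbon t k)"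
proof
  fix x assume "x \<in> profile_cells t"
  then obtain a j where "x = (a, j)" "a \<le> j" "j < t a" unfolding profile_cells_def by blast
  moreover have "t a \<le> t (Suc a)" by (rule dyck_profile_mono[OF profile]) simp
  ultimately show "x \<in> profile_cells (add_ribbon t k)"
    unfolding profile_cells_def add_ribbon_def by auto
qed

lemma profile_cells_add_ribbon_diff:
  "profile_cells (add_ribbon t k) - profile_cells t = ribbon_band t k n"
proof
  show "profile_cells (add_ribbon t k) - profile_cells t \<subseteq> ribbon_band t k n"
  proof
    fix x assume x_in: "x \<in> profile_cells (add_ribbon t k) - profile_cells t"
    then obtain a j where x: "x = (a, j)" "a \<le> j" "j < add_ribbon t k a"
      unfolding profile_cells_def by blast
    with x_in have "t a \<le> j" unfolding profile_cells_def by auto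
    then have "k \<le> a" "j \<le> t (Suc a)" using x unfolding add_ribbon_def by (auto split: if_splits)
    moreover have "a \<le> n"
      using x \<open>j \<le> t (Suc a)\<close> dyck_profile_eq[OF profile, of a]
        dyck_profile_eq[OF profile, of "Suc a"] by (cases "n \<le> a") auto
    ultimately show "x \<in> ribbon_band t k n" using x \<open>t a \<le> j\<close> unfolding ribbon_band_def by auto
  qed
  show "ribbon_band t k n \<subseteq> profile_cells (add_ribbon t k) - profile_cells t"
  proof
    fix x assume "x \<in> ribbon_band t k n"
    then obtain a j where x: "x = (a, j)" "k \<le> a" "a \<le> n" "t a \<le> j" "j \<le> t (Suc a)"
      unfolding ribbon_band_def by auto
    moreover have "a \<le> t a" using dyck_profile_ge[OF profile] x(3) .
    ultimately show "x \<in> profile_cells (add_ribbon t k) - profile_cells t"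
      unfolding profile_cells_def add_ribbon_def by auto
  qed
qed

end

context
  fixes t :: "nat \<Rightarrow> nat" and k n :: nat
  assumes mono: "mono t" and "k \<le> n"
begin

lemma ribbon_band_last_diagonal: "(n, t n) \<in> ribbon_band t k n"
  using \<open>k \<le> n\<close> monoD[OF mono, of n "Suc n"] unfolding ribbon_band_def by simp

lemma connected_ribbon_band: "connected_cells (ribbon_band t k n)"
proof (rule connected_cellsI[OF ribbon_band_last_diagonal])
  let ?S = "ribbon_band t k n"
  have "\<forall>j. (a, j) \<in> ?S \<longrightarrow> (cell_step ?S)\<^sup>*\<^sup>* (a, j) (n, t n)" if "a \<le> n" for a
    using that
  proof (induction a rule: inc_induct)
    case base
    show ?case
    proof (intro allI impI)
      fix j assume "(n, j) \<in> ?S"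
      then have "(cell_step ?S)\<^sup>*\<^sup>* (n, t n) (n, j)"
        by (intro cell_path_along_diagonal) (auto simp: ribbon_band_def)
      then show "(cell_step ?S)\<^sup>*\<^sup>* (n, j) (n, t n)"
        by (rule sympD[OF symp_rtranclp[OF symp_cell_step]])
    qed
  next
    case (step m)
    show ?case
    proof (intro allI impI)
      fix j assume j: "(m, j) \<in> ?S"
      have along_row: "(cell_step ?S)\<^sup>*\<^sup>* (m, j) (m, t (Suc m))"
        using j by (intro cell_path_along_diagonal) (auto simp: ribbon_band_def)
      have next_cell: "(Suc m, t (Suc m)) \<in> ?S"
        using j step(2) monoD[OF mono, of "Suc m" "Suc (Suc m)"] by (auto simp: ribbon_band_def)
      then have "cell_step ?S (m, t (Suc m)) (Suc m, t (Suc m))"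
        using j by (auto simp: ribbon_band_def adjacent_cells_def)
      moreover have "(cell_step ?S)\<^sup>*\<^sup>* (Suc m, t (Suc m)) (n, t n)"
        using step.IH next_cell by blast
      ultimately have "(cell_step ?S)\<^sup>*\<^sup>* (m, t (Suc m)) (n, t n)"
        by (rule converse_rtranclp_into_rtranclp)
      with along_row show "(cell_step ?S)\<^sup>*\<^sup>* (m, j) (n, t n)"
        by (rule rtranclp_trans)
    qed
  qed
  then show "(cell_step ?S)\<^sup>*\<^sup>* x (n, t n)" if "x \<in> ?S" for x
    using that unfolding ribbon_band_def by blast
qed

lemma ribbon_ribbon_band: "ribbon (ribbon_band t k n)"
  unfolding ribbon_def
proof (intro conjI notI connected_ribbon_band)
  assume "\<exists>i j. {(i, j), (Suc i, j), (i, Suc j), (Suc i, Suc j)} \<subseteq> ribbon_band t k n"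
  then obtain i j where "(Suc i, j) \<in> ribbon_band t k n" "(i, Suc j) \<in> ribbon_band t k n"
    by blast
  then show False unfolding ribbon_band_def by auto
qed

lemma sw_ne_diagonals_ribbon_band: "sw_ne_diagonals (ribbon_band t k n) = {k..n}"
proof
  show "sw_ne_diagonals (ribbon_band t k n) \<subseteq> {k..n}"
    unfolding sw_ne_diagonals_def ribbon_band_def by auto
  show "{k..n} \<subseteq> sw_ne_diagonals (ribbon_band t k n)"
  proof
    fix a assume "a \<in> {k..n}"
    then have "(a, t a) \<in> ribbon_band t k n"
      using monoD[OF mono, of a "Suc a"] unfolding ribbon_band_def by auto
    then show "a \<in> sw_ne_diagonals (ribbon_band t k n)"
      unfolding sw_ne_diagonals_def by (metis fst_conv image_eqI)
  qed
qed

end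

lemma ribbon_addition_add_ribbon:
  assumes t: "dyck_profile n t" and "k \<le> n"
  shows "dyck_shape (n + 1) (profile_cells (add_ribbon t k))
    \<and> profile_cells t \<subseteq> profile_cells (add_ribbon t k)
    \<and> ribbon (profile_cells (add_ribbon t k) - profile_cells t)
    \<and> card (sw_ne_diagonals (profile_cells (add_ribbon t k) - profile_cells t)) = n + 1 - k"
proof -
  have "mono t" using t unfolding dyck_profile_def by blast
  then show ?thesis
    using dyck_shape_profile_cells[OF dyck_profile_add_ribbon[OF t \<open>k \<le> n\<close>]]
      profile_cells_subset_add_ribbon[OF t] profile_cells_add_ribbon_diff[OF t]
      ribbon_ribbon_band sw_ne_diagonals_ribbon_band \<open>k \<le> n\<close>
    by simp
qed

subsection \<open>Every ribbon addition is of this form\<close>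

lemma profile_le_of_subset:
  assumes t: "dyck_profile n t" and s: "dyck_profile m s" and "n \<le> m"
    and sub: "profile_cells t \<subseteq> profile_cells s"
  shows "t a \<le> s a"
proof (cases "a < n")
  case True
  then have "(a, t a - 1) \<in> profile_cells t"
    using dyck_profile_less[OF t, of a] unfolding profile_cells_def by simp
  then have "t a - 1 < s a" using sub unfolding profile_cells_def by blast
  then show ?thesis by simp
next
  case False
  then have "t a = n" by (simp add: dyck_profile_eq[OF t])
  also have "n \<le> s n" using dyck_profile_ge[OF s] \<open>n \<le> m\<close> .
  also have "s n \<le> s a" using dyck_profile_mono[OF s] False by simp
  finally show ?thesis .
qed

context
  fixes n :: nat and t s :: "nat \<Rightarrow> nat"
  assumes t: "dyck_profile n t" and s: "dyck_profile (n + 1) s"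
    and sub: "profile_cells t \<subseteq> profile_cells s"
    and rib: "ribbon (profile_cells s - profile_cells t)"
begin

lemma sw_ne_diagonals_profile_diff:
  "a \<in> sw_ne_diagonals (profile_cells s - profile_cells t) \<longleftrightarrow> a \<le> n \<and> t a < s a"
proof
  assume "a \<in> sw_ne_diagonals (profile_cells s - profile_cells t)"
  then obtain j where "(a, j) \<in> profile_cells s - profile_cells t"
    unfolding sw_ne_diagonals_def by force
  then have "a \<le> j" "j < s a" "t a \<le> j" unfolding profile_cells_def by auto
  then show "a \<le> n \<and> t a < s a"
    using dyck_profile_eq[OF s, of a] by (cases "n + 1 \<le> a") auto
next
  assume "a \<le> n \<and> t a < s a"
  then have "(a, t a) \<in> profile_cells s - profile_cells t"
    using dyck_profile_ge[OF t, of a] unfolding profile_cells_def by auto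
  then show "a \<in> sw_ne_diagonals (profile_cells s - profile_cells t)"
    unfolding sw_ne_diagonals_def by (metis fst_conv image_eqI)
qed

lemma connected_profile_diff: "connected_cells (profile_cells s - profile_cells t)"
  using rib unfolding ribbon_def by blast

lemma last_diagonal_in_profile_diff: "(n, n) \<in> profile_cells s - profile_cells t"
  using dyck_profile_eq[OF t, of n] dyck_profile_less[OF s, of n]
  unfolding profile_cells_def by simp

lemma sw_ne_diagonals_profile_diff_Suc:
  assumes "a < n" and "a \<in> sw_ne_diagonals (profile_cells s - profile_cells t)"
  obtains j where "(a, j) \<in> profile_cells s - profile_cells t"
    and "(Suc a, j) \<in> profile_cells s - profile_cells t"
proof -
  obtain x where x: "x \<in> profile_cells s - profile_cells t" "fst x = a"
    using assms(2) unfolding sw_ne_diagonals_def by blast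
  show thesis
    using connected_cells_crossing[OF connected_profile_diff x(1) last_diagonal_in_profile_diff,
        of a] x(2) assms(1) that by auto
qed

lemma profile_eq_add_ribbon_Suc:
  assumes "a < n" and "a \<in> sw_ne_diagonals (profile_cells s - profile_cells t)"
  shows "s a = Suc (t (Suc a))"
proof (rule antisym)
  obtain j where "(a, j) \<in> profile_cells s" "(Suc a, j) \<in> profile_cells s - profile_cells t"
    using sw_ne_diagonals_profile_diff_Suc[OF assms] by blast
  then have "j < s a" "t (Suc a) \<le> j" unfolding profile_cells_def by auto
  then show "Suc (t (Suc a)) \<le> s a" by simp
next
  show "s a \<le> Suc (t (Suc a))"
  proof (rule ccontr)
    let ?j = "t (Suc a)"
    assume "\<not> s a \<le> Suc ?j"
    moreover have "s a \<le> s (Suc a)" "t a \<le> ?j" "Suc a \<le> ?j"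
      using dyck_profile_mono[OF s, of a "Suc a"] dyck_profile_mono[OF t, of a "Suc a"]
        dyck_profile_ge[OF t, of "Suc a"] \<open>a < n\<close>
      by auto
    ultimately have "{(a, ?j), (Suc a, ?j), (a, Suc ?j), (Suc a, Suc ?j)}
        \<subseteq> profile_cells s - profile_cells t"
      unfolding profile_cells_def by auto
    then show False using rib unfolding ribbon_def by blast
  qed
qed

lemma profile_eq_add_ribbon: "\<exists>k\<le>n. s = add_ribbon t k"
proof -
  let ?N = "sw_ne_diagonals (profile_cells s - profile_cells t)"
  define k where "k = (LEAST a. a \<in> ?N)"
  have "n \<in> ?N"
    using sw_ne_diagonals_profile_diff dyck_profile_eq[OF t, of n] dyck_profile_less[OF s, of n]
    by simp
  then have "k \<le> n" "k \<in> ?N" unfolding k_def by (auto intro: Least_le LeastI)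
  have above: "k \<le> a \<longrightarrow> a \<le> n \<longrightarrow> a \<in> ?N" for a
  proof (induction a)
    case (Suc m)
    show ?case
    proof (intro impI)
      assume "k \<le> Suc m" "Suc m \<le> n"
      show "Suc m \<in> ?N"
      proof (cases "k = Suc m")
        case False
        with Suc.IH \<open>k \<le> Suc m\<close> \<open>Suc m \<le> n\<close> have "m < n" "m \<in> ?N" by auto
        then obtain j where "(Suc m, j) \<in> profile_cells s - profile_cells t"
          by (rule sw_ne_diagonals_profile_diff_Suc)
        then show ?thesis unfolding sw_ne_diagonals_def by (metis fst_conv image_eqI)
      qed (use \<open>k \<in> ?N\<close> in auto)
    qed
  qed (use \<open>k \<in> ?N\<close> in auto)
  have "s a = add_ribbon t k a" for a
  proof -
    consider "a < k" | "k \<le> a" "a < n" | "n \<le> a" by linarith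
    then show ?thesis
    proof cases
      case 1
      then have "a \<notin> ?N" unfolding k_def using not_less_Least by blast
      moreover have "t a \<le> s a" by (rule profile_le_of_subset[OF t s _ sub]) simp
      ultimately show ?thesis
        using 1 \<open>k \<le> n\<close> sw_ne_diagonals_profile_diff unfolding add_ribbon_def by auto
    next
      case 2
      then show ?thesis
        using above profile_eq_add_ribbon_Suc unfolding add_ribbon_def by simp
    next
      case 3
      then have "s a = n + 1"
        using dyck_profile_eq[OF s, of a] dyck_profile_less[OF s, of n] dyck_profile_le[OF s, of n]
        by (cases "a = n") auto
      then show ?thesis
        using 3 \<open>k \<le> n\<close> dyck_profile_eq[OF t, of "Suc a"] unfolding add_ribbon_def by simp
    qed
  qed
  with \<open>k \<le> n\<close> show ?thesis by blast
qed

end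

theorem mainTheorem2:
  fixes n i :: nat and D :: "(nat \<times> nat) set"
  assumes "dyck_shape n D" and "1 \<le> i" and "i \<le> n + 1"
  shows "\<exists>!E. dyck_shape (n + 1) E \<and> D \<subseteq> E \<and> ribbon (E - D)
              \<and> card (sw_ne_diagonals (E - D)) = i"
proof -
  obtain t where t: "dyck_profile n t" and D: "D = profile_cells t"
    using dyck_shape_imp_profile[OF assms(1)] .
  let ?E = "\<lambda>k. profile_cells (add_ribbon t k)"
  show ?thesis
  proof (rule ex1I[of _ "?E (n + 1 - i)"])
    show "dyck_shape (n + 1) (?E (n + 1 - i)) \<and> D \<subseteq> ?E (n + 1 - i)
        \<and> ribbon (?E (n + 1 - i) - D) \<and> card (sw_ne_diagonals (?E (n + 1 - i) - D)) = i"
      using ribbon_addition_add_ribbon[OF t, of "n + 1 - i"] assms unfolding D by simp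
    fix E assume E: "dyck_shape (n + 1) E \<and> D \<subseteq> E \<and> ribbon (E - D)
        \<and> card (sw_ne_diagonals (E - D)) = i"
    then obtain s where s: "dyck_profile (n + 1) s" and "E = profile_cells s"
      using dyck_shape_imp_profile by blast
    with E obtain k where "k \<le> n" and "E = ?E k"
      using profile_eq_add_ribbon[OF t s] unfolding D by blast
    with E show "E = ?E (n + 1 - i)"
      using ribbon_addition_add_ribbon[OF t \<open>k \<le> n\<close>] unfolding D by auto
  qed
qed

end
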